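(* Let the setting and Assumption (A) be as in the context and assume Assumption (A) holds. Let $\delta_0\le\frac{c_0}{\varsigma^2}\frac{\overline\sigma}{\|\mathbf X\|_{\infty,2}}$ with $c_0\in[0,1/2)$ a sufficiently small absolute constant. Then there exists a constant $c=c(c_0)\in(0,1)$ such that for all $k\in[K]$ and all $\theta\in\mathbb{R}^L$ with $\|\theta-\theta_k^*\|_2\le\delta_0/\overline\sigma$, $$(1-c)\underline\sigma^2\le\lambda_L(H_\theta)\le\lambda_1(H_\theta)\le(1+c)\overline\sigma^2.$$
   Context: $\mathbf X\in\mathbb{R}^{p\times L}$ has rows $x_j^\top$, $\|\mathbf X\|_{\infty,2}=\max_j\|x_j\|_2$; $A(x_j;\theta)=\exp(x_j^\top\theta)/\sum_l\exp(x_l^\top\theta)$, $A(\theta)\in\Delta^p$; $H_\theta=\mathbf X^\top(\mathrm{diag}(A(\theta))-A(\theta)A(\theta)^\top)\mathbf X$, with eigenvalues $\lambda_1\ge\dots\ge\lambda_L$. For $\omega=(\boldsymbol\alpha,\theta_1,\dots,\theta_K)$, $\pi(x_j;\omega)=\sum_k\alpha_kA(x_j;\theta_k)$. $\omega^*=(\boldsymbol\alpha^*,\theta_1^*,\dots,\theta_K^* )$ with all $\alpha^*_k>0$, $\pi^*=\pi(\cdot;\omega^* )$, and $\omega^*\in\Omega^*$, the set of maximizers of $\sum_j\pi^*(x_j)\log\pi(x_j;\omega)$. Assumption (A): constants $0<\underline\sigma^2\le\overline\sigma^2$, $\varsigma^2<\infty$ such that for every $\omega'\in\Omega^*$, $a,b\in[K]$,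 $u\in[0,1]$, $\theta=u\theta'_a+(1-u)\theta'_b$: $\underline\sigma^2\le\lambda_L(H_\theta)\le\lambda_1(H_\theta)\le\overline\sigma^2$ and $\lambda_1(H_\theta^{-1/2}\mathbf X^\top\mathrm{diag}(A(\theta))\mathbf XH_\theta^{-1/2})\le\varsigma^2$. *)

theory Defs
  imports Complex_Main "Jordan_Normal_Form.Matrix" "Jordan_Normal_Form.Char_Poly"
begin

(* X is a p x L real matrix (JNF), rows x_j = row X j; parameters theta are vectors of dim L *)

definition vnorm :: "real vec \<Rightarrow> real" where
  "vnorm v = sqrt (v \<bullet> v)"

definition Xnorm :: "real mat \<Rightarrow> real" where
  "Xnorm X = Max ((\<lambda>j. vnorm (row X j)) ` {..<dim_row X})"

definition softmax :: "real mat \<Rightarrow> real vec \<Rightarrow> nat \<Rightarrow> real" where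
  "softmax X \<theta> j = exp (row X j \<bullet> \<theta>) / (\<Sum>l<dim_row X. exp (row X l \<bullet> \<theta>))"

definition diagm :: "nat \<Rightarrow> (nat \<Rightarrow> real) \<Rightarrow> real mat" where
  "diagm n f = mat n n (\<lambda>(i,j). if i = j then f i else 0)"

definition Hmat :: "real mat \<Rightarrow> real vec \<Rightarrow> real mat" where
  "Hmat X \<theta> = transpose_mat X *
     (diagm (dim_row X) (softmax X \<theta>)
      - mat (dim_row X) (dim_row X) (\<lambda>(i,j). softmax X \<theta> i * softmax X \<theta> j)) * X"

definition Mmat :: "real mat \<Rightarrow> real vec \<Rightarrow> real mat" where
  "Mmat X \<theta> = transpose_mat X * diagm (dim_row X) (softmax X \<theta>) * X"

definition lam_max :: "real mat \<Rightarrow> real" where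
  "lam_max H = Max {k. eigenvalue H k}"

definition lam_min :: "real mat \<Rightarrow> real" where
  "lam_min H = Min {k. eigenvalue H k}"

definition pos_def_mat :: "real mat \<Rightarrow> nat \<Rightarrow> bool" where
  "pos_def_mat S n \<longleftrightarrow> S \<in> carrier_mat n n \<and> transpose_mat S = S \<and>
     (\<forall>v \<in> carrier_vec n. v \<noteq> 0\<^sub>v n \<longrightarrow> v \<bullet> (S *\<^sub>v v) > 0)"

(* H^{-1/2}: the unique symmetric positive definite S with S S H = I *)
definition inv_sqrt :: "real mat \<Rightarrow> real mat" where
  "inv_sqrt H = (THE S. pos_def_mat S (dim_row H) \<and> S * S * H = 1\<^sub>m (dim_row H))"

definition mixture :: "real mat \<Rightarrow> nat \<Rightarrow> (nat \<Rightarrow> real) \<Rightarrow> (nat \<Rightarrow> real vec) \<Rightarrow> nat \<Rightarrow> real" where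
  "mixture X K \<alpha> \<Theta> j = (\<Sum>k<K. \<alpha> k * softmax X (\<Theta> k) j)"

(* omega = (alpha, theta_1..theta_K) with alpha in the simplex, theta_k in R^L *)
definition in_param :: "real mat \<Rightarrow> nat \<Rightarrow> (nat \<Rightarrow> real) \<Rightarrow> (nat \<Rightarrow> real vec) \<Rightarrow> bool" where
  "in_param X K \<alpha> \<Theta> \<longleftrightarrow> (\<forall>k<K. 0 \<le> \<alpha> k) \<and> sum \<alpha> {..<K} = 1 \<and>
     (\<forall>k<K. \<Theta> k \<in> carrier_vec (dim_col X))"

definition loglik :: "real mat \<Rightarrow> nat \<Rightarrow> (nat \<Rightarrow> real) \<Rightarrow> (nat \<Rightarrow> real vec)
     \<Rightarrow> (nat \<Rightarrow> real) \<Rightarrow> (nat \<Rightarrow> real vec) \<Rightarrow> real" where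
  "loglik X K \<alpha>s \<Theta>s \<alpha> \<Theta> = (\<Sum>j<dim_row X. mixture X K \<alpha>s \<Theta>s j * ln (mixture X K \<alpha> \<Theta> j))"

definition in_Omega_star :: "real mat \<Rightarrow> nat \<Rightarrow> (nat \<Rightarrow> real) \<Rightarrow> (nat \<Rightarrow> real vec)
     \<Rightarrow> (nat \<Rightarrow> real) \<Rightarrow> (nat \<Rightarrow> real vec) \<Rightarrow> bool" where
  "in_Omega_star X K \<alpha>s \<Theta>s \<alpha> \<Theta> \<longleftrightarrow> in_param X K \<alpha> \<Theta> \<and>
     (\<forall>\<alpha>' \<Theta>'. in_param X K \<alpha>' \<Theta>' \<longrightarrow> loglik X K \<alpha>s \<Theta>s \<alpha>' \<Theta>' \<le> loglik X K \<alpha>s \<Theta>s \<alpha> \<Theta>)"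

(* Assumption (A) with constants sl2 = underline sigma^2, su2 = overline sigma^2, vs2 = varsigma^2 *)
definition assumption_A :: "real mat \<Rightarrow> nat \<Rightarrow> (nat \<Rightarrow> real) \<Rightarrow> (nat \<Rightarrow> real vec)
     \<Rightarrow> real \<Rightarrow> real \<Rightarrow> real \<Rightarrow> bool" where
  "assumption_A X K \<alpha>s \<Theta>s sl2 su2 vs2 \<longleftrightarrow> 0 < sl2 \<and> sl2 \<le> su2 \<and>
     (\<forall>\<alpha>' \<Theta>'. in_Omega_star X K \<alpha>s \<Theta>s \<alpha>' \<Theta>' \<longrightarrow>
        (\<forall>a<K. \<forall>b<K. \<forall>u::real. 0 \<le> u \<and> u \<le> 1 \<longrightarrow>
           (let \<theta> = u \<cdot>\<^sub>v \<Theta>' a + (1 - u) \<cdot>\<^sub>v \<Theta>' b in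
              sl2 \<le> lam_min (Hmat X \<theta>) \<and> lam_min (Hmat X \<theta>) \<le> lam_max (Hmat X \<theta>) \<and>
              lam_max (Hmat X \<theta>) \<le> su2 \<and>
              lam_max (inv_sqrt (Hmat X \<theta>) * Mmat X \<theta> * inv_sqrt (Hmat X \<theta>)) \<le> vs2)))"

end

theory Submission
  imports Defs "Jordan_Normal_Form.Schur_Decomposition"
begin

(*
  Write E = exp (2 ||X||_{inf,2} ||theta - theta_k^*||).  Moving from theta_k^* to theta changes
  every softmax weight A(x_j; .) by at most the factor E, and v^T H_theta v is the variance of the
  numbers x_j^T v under these weights.  Comparing the two variances gives
  v^T H_theta v <= E v^T H_{theta_k^*} v and the converse, so the extreme eigenvalues of H_theta
  lie in [sigma_lower^2 / E, E sigma_upper^2].  Assumption (A) at u = 1, a = b = k controls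
  H_{theta_k^*}; it also forces varsigma^2 >= 1, because H <= X^T diag(A) X in the Loewner order.
  Hence the radius condition gives ||X||_{inf,2} ||theta - theta_k^*|| <= c0 <= 1/8, so E <= 3/2,
  which is the claim with C0 = 1/8 and c = 1/2.
*)

lemma scalar_prod_self_nonneg: "0 \<le> (v::real vec) \<bullet> v"
  using conjugate_square_ge_0_vec[of v] by simp

lemma scalar_prod_self_pos:
  assumes "(v::real vec) \<in> carrier_vec n" "v \<noteq> 0\<^sub>v n"
  shows "0 < v \<bullet> v"
  using conjugate_square_greater_0_vec[OF assms(1)] assms(2) by simp

lemma vnorm_nonneg: "0 \<le> vnorm v"
  by (simp add: vnorm_def scalar_prod_self_nonneg)

lemma vnorm_minus_commute:
  assumes "x \<in> carrier_vec n" "y \<in> carrier_vec n"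
  shows "vnorm (x - y) = vnorm (y - x)"
proof -
  have "y - x = - (x - y)"
    using assms by (intro eq_vecI) auto
  then show ?thesis
    using assms by (simp add: vnorm_def)
qed

lemma scalar_prod_square_le:
  fixes x y :: "real vec"
  assumes x: "x \<in> carrier_vec n" and y: "y \<in> carrier_vec n"
  shows "(x \<bullet> y)\<^sup>2 \<le> (x \<bullet> x) * (y \<bullet> y)"
proof (cases "y = 0\<^sub>v n")
  case True
  then show ?thesis
    using x by simp
next
  case False
  define t where "t = y \<bullet> y"
  define s where "s = x \<bullet> y"
  have "0 \<le> (t \<cdot>\<^sub>v x - s \<cdot>\<^sub>v y) \<bullet> (t \<cdot>\<^sub>v x - s \<cdot>\<^sub>v y)"
    by (rule scalar_prod_self_nonneg)
  also have "\<dots> = t * (t * (x \<bullet> x) - s\<^sup>2)"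
    using x y
    by (simp add: minus_scalar_prod_distrib[of _ n] scalar_prod_minus_distrib[of _ n]
        comm_scalar_prod[of y n x] t_def s_def power2_eq_square algebra_simps)
  finally show ?thesis
    using scalar_prod_self_pos[OF y False]
    by (simp add: t_def s_def zero_le_mult_iff mult.commute)
qed

lemma abs_scalar_prod_le_vnorm:
  fixes x y :: "real vec"
  assumes "x \<in> carrier_vec n" "y \<in> carrier_vec n"
  shows "\<bar>x \<bullet> y\<bar> \<le> vnorm x * vnorm y"
  using real_sqrt_le_mono[OF scalar_prod_square_le[OF assms]]
  by (simp add: vnorm_def real_sqrt_mult)

section \<open>Symmetric matrices and the spectral theorem\<close>

lemma symmetric_mat_scalar_prod_swap:
  fixes A :: "'a::comm_ring mat"
  assumes A: "A \<in> carrier_mat n n" and sym: "transpose_mat A = A"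
    and x: "x \<in> carrier_vec n" and y: "y \<in> carrier_vec n"
  shows "x \<bullet> (A *\<^sub>v y) = y \<bullet> (A *\<^sub>v x)"
  using transpose_vec_mult_scalar[OF A y x] comm_scalar_prod[of "A *\<^sub>v x" n y] A x y sym
  by simp

lemma symmetric_congruence:
  fixes A X :: "'a::comm_semiring_0 mat"
  assumes "X \<in> carrier_mat p n" "A \<in> carrier_mat p p" "transpose_mat A = A"
  shows "transpose_mat (transpose_mat X * A * X) = transpose_mat X * A * X"
  using assms by (simp add: transpose_mult[of _ n p _ n] transpose_mult[of _ p p _ n]
      assoc_mult_mat[of _ n p _ p _ n])

lemma quadratic_form_congruence:
  fixes X B :: "'a::comm_semiring_0 mat"
  assumes X: "X \<in> carrier_mat p n" and B: "B \<in> carrier_mat p p" and v: "v \<in> carrier_vec n"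
  shows "v \<bullet> ((transpose_mat X * B * X) *\<^sub>v v) = (X *\<^sub>v v) \<bullet> (B *\<^sub>v (X *\<^sub>v v))"
proof -
  have "(transpose_mat X * B * X) *\<^sub>v v = transpose_mat X *\<^sub>v (B *\<^sub>v (X *\<^sub>v v))"
    using assoc_mult_mat_vec[of "transpose_mat X * B" n p X n v]
      assoc_mult_mat_vec[of "transpose_mat X" n p B p "X *\<^sub>v v"] X B v
    by (metis mult_carrier_mat mult_mat_vec_carrier transpose_carrier_mat)
  then show ?thesis
    using transpose_vec_mult_scalar[of X p n v "B *\<^sub>v (X *\<^sub>v v)"] X B v
      comm_scalar_prod[of v n] comm_scalar_prod[of "X *\<^sub>v v" p] by simp
qed

lemma diagm_carrier [simp]: "diagm n d \<in> carrier_mat n n"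
  by (simp add: diagm_def)

lemma transpose_diagm [simp]: "transpose_mat (diagm n d) = diagm n d"
  by (auto simp: diagm_def intro!: eq_matI)

lemma diagm_mult_vec:
  assumes "w \<in> carrier_vec n"
  shows "diagm n d *\<^sub>v w = vec n (\<lambda>i. d i * w $ i)"
proof (rule eq_vecI)
  fix i assume "i < dim_vec (vec n (\<lambda>i. d i * w $ i))"
  then have i: "i < n" by simp
  have "(diagm n d *\<^sub>v w) $ i = (\<Sum>j\<in>{0..<n}. (if i = j then d i else 0) * w $ j)"
    using assms i by (simp add: diagm_def scalar_prod_def row_def)
  also have "\<dots> = (\<Sum>j\<in>{0..<n}. if j = i then d i * w $ i else 0)"
    by (rule sum.cong) auto
  also have "\<dots> = d i * w $ i"
    using i by simp
  finally show "(diagm n d *\<^sub>v w) $ i = vec n (\<lambda>i. d i * w $ i) $ i"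
    using i by simp
qed (simp add: diagm_def)

lemma quadratic_form_diagm:
  assumes "w \<in> carrier_vec n"
  shows "w \<bullet> (diagm n d *\<^sub>v w) = (\<Sum>i<n. d i * (w $ i)\<^sup>2)"
  using assms by (simp add: diagm_mult_vec scalar_prod_def lessThan_atLeast0 power2_eq_square
      algebra_simps)

lemma diagm_mult: "diagm n e * diagm n f = diagm n (\<lambda>i. e i * f i)"
proof (rule eq_matI)
  fix i j assume "i < dim_row (diagm n (\<lambda>i. e i * f i))" "j < dim_col (diagm n (\<lambda>i. e i * f i))"
  then have ij: "i < n" "j < n"
    by (auto simp: diagm_def)
  have "(diagm n e * diagm n f) $$ (i, j) =
      (\<Sum>k\<in>{0..<n}. (if i = k then e i else 0) * (if k = j then f k else 0))"
    using ij by (simp add: diagm_def scalar_prod_def row_def col_def)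
  also have "\<dots> = (\<Sum>k\<in>{0..<n}. if k = i then (if i = j then e i * f i else 0) else 0)"
    by (rule sum.cong) auto
  finally show "(diagm n e * diagm n f) $$ (i, j) = diagm n (\<lambda>i. e i * f i) $$ (i, j)"
    using ij by (simp add: diagm_def)
qed (auto simp: diagm_def)

lemma conjugate_of_real_mat_mult_vec:
  fixes A :: "real mat" and v :: "complex vec"
  assumes "A \<in> carrier_mat m n" "v \<in> carrier_vec n"
  shows "conjugate (map_mat complex_of_real A *\<^sub>v v) = map_mat complex_of_real A *\<^sub>v conjugate v"
  using assms by (intro eq_vecI) (auto simp: scalar_prod_def)

lemma symmetric_real_mat_has_eigenvalue:
  fixes A :: "real mat"
  assumes A: "A \<in> carrier_mat n n" and sym: "transpose_mat A = A" and n: "0 < n"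
  shows "\<exists>k. eigenvalue A k"
proof -
  let ?C = "map_mat complex_of_real A"
  have C: "?C \<in> carrier_mat n n" and Csym: "transpose_mat ?C = ?C"
    using A sym by (auto simp: map_mat_transpose)
  have "\<not> constant (poly (char_poly ?C))"
    using degree_monic_char_poly[OF C] n by (simp add: constant_degree)
  then obtain a where "poly (char_poly ?C) a = 0"
    using fundamental_theorem_of_algebra by blast
  then obtain v where v: "v \<in> carrier_vec n" "v \<noteq> 0\<^sub>v n" and Cv: "?C *\<^sub>v v = a \<cdot>\<^sub>v v"
    using eigenvalue_root_char_poly[OF C] C unfolding eigenvalue_def eigenvector_def by auto
  (* The Hermitian form v^H C v of the real symmetric C is real, hence so is the eigenvalue a. *)
  have "(?C *\<^sub>v conjugate v) \<bullet> v = conjugate v \<bullet> (?C *\<^sub>v v)"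
    using transpose_vec_mult_scalar[OF C v(1), of "conjugate v"] Csym v by simp
  then have "cnj a * (conjugate v \<bullet> v) = a * (conjugate v \<bullet> v)"
    using v unfolding conjugate_of_real_mat_mult_vec[OF A v(1), symmetric] Cv
    by (simp add: conjugate_smult_vec)
  moreover have "conjugate v \<bullet> v \<noteq> 0"
    using conjugate_square_greater_0_vec[OF v(1)] v conjugate_vec_sprod_comm[OF v(1) v(1)]
    by auto
  ultimately have "cnj a = a"
    by simp
  then have "a = complex_of_real (Re a)"
    by (auto simp: complex_eq_iff)
  then have "complex_of_real (poly (char_poly A) (Re a)) = 0"
    using \<open>poly (char_poly ?C) a = 0\<close>
    by (metis of_real_hom.char_poly_hom[OF A] of_real_hom.poly_map_poly)
  then show ?thesis
    using eigenvalue_root_char_poly[OF A] by auto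
qed

lemma symmetric_real_mat_unit_eigenvector:
  fixes A :: "real mat"
  assumes A: "A \<in> carrier_mat n n" and sym: "transpose_mat A = A" and n: "0 < n"
  obtains \<alpha> v where "v \<in> carrier_vec n" "v \<bullet> v = 1" "A *\<^sub>v v = \<alpha> \<cdot>\<^sub>v v"
proof -
  obtain \<alpha> where "eigenvalue A \<alpha>"
    using symmetric_real_mat_has_eigenvalue[OF assms] by blast
  then obtain w where w: "w \<in> carrier_vec n" "w \<noteq> 0\<^sub>v n" "A *\<^sub>v w = \<alpha> \<cdot>\<^sub>v w"
    using A unfolding eigenvalue_def eigenvector_def by auto
  have "0 < w \<bullet> w"
    using scalar_prod_self_pos[OF w(1,2)] .
  then show ?thesis
    using w A by (intro that[of "(1 / sqrt (w \<bullet> w)) \<cdot>\<^sub>v w" \<alpha>])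
      (auto simp: mult_mat_vec smult_smult_assoc mult.commute)
qed

definition orthonormal_mat :: "nat \<Rightarrow> real mat \<Rightarrow> bool" where
  "orthonormal_mat n U \<longleftrightarrow> U \<in> carrier_mat n n \<and> transpose_mat U * U = 1\<^sub>m n"

lemma orthonormal_matD:
  assumes "orthonormal_mat n U"
  shows "U \<in> carrier_mat n n" "transpose_mat U \<in> carrier_mat n n"
    "transpose_mat U * U = 1\<^sub>m n" "U * transpose_mat U = 1\<^sub>m n"
  using assms mat_mult_left_right_inverse[of "transpose_mat U" n U]
  unfolding orthonormal_mat_def by auto

lemma orthonormal_mat_cancel:
  assumes "orthonormal_mat n U" "X \<in> carrier_mat n k"
  shows "transpose_mat U * (U * X) = X" "U * (transpose_mat U * X) = X"
  using orthonormal_matD[OF assms(1)] assms(2)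
  by (simp_all flip: assoc_mult_mat[of _ n n _ n _ k])

lemma orthonormal_mat_mult:
  assumes "orthonormal_mat n U" "orthonormal_mat n V"
  shows "orthonormal_mat n (U * V)"
proof -
  note U = orthonormal_matD[OF assms(1)] and V = orthonormal_matD[OF assms(2)]
  have "transpose_mat (U * V) * (U * V) = 1\<^sub>m n"
    using U V orthonormal_mat_cancel[OF assms(1) V(1)]
    by (simp add: transpose_mult[of _ n n] assoc_mult_mat[of _ n n _ n _ n])
  then show ?thesis
    using U V unfolding orthonormal_mat_def by simp
qed

lemma orthonormal_mat_normalize_cols:
  fixes ws :: "real vec list"
  assumes ws: "set ws \<subseteq> carrier_vec n" "corthogonal ws" "length ws = n"
  defines "W \<equiv> mat_of_cols n (map (\<lambda>w. (1 / sqrt (w \<bullet> w)) \<cdot>\<^sub>v w) ws)"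
  shows "orthonormal_mat n W" "\<And>i. i < n \<Longrightarrow> col W i = (1 / sqrt (ws ! i \<bullet> ws ! i)) \<cdot>\<^sub>v ws ! i"
proof -
  have wsi: "ws ! i \<in> carrier_vec n" if "i < n" for i
    using that ws by auto
  have orth: "ws ! i \<bullet> ws ! j = 0 \<longleftrightarrow> i \<noteq> j" if "i < n" "j < n" for i j
    using ws(2,3) that unfolding corthogonal_def by simp
  show W: "col W i = (1 / sqrt (ws ! i \<bullet> ws ! i)) \<cdot>\<^sub>v ws ! i" if "i < n" for i
    using that ws wsi unfolding W_def by simp
  have "col W i \<bullet> col W j = (if i = j then 1 else 0)" if ij: "i < n" "j < n" for i j
  proof -
    have "0 < ws ! i \<bullet> ws ! i"
      using orth[OF ij(1) ij(1)] scalar_prod_self_nonneg[of "ws ! i"] by simp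
    then show ?thesis
      using orth[OF ij] wsi[OF ij(1)] wsi[OF ij(2)] by (cases "i = j") (auto simp: W ij)
  qed
  moreover have "W \<in> carrier_mat n n"
    unfolding W_def using ws by auto
  ultimately show "orthonormal_mat n W"
    unfolding orthonormal_mat_def by (auto intro!: eq_matI)
qed

lemma orthonormal_mat_extension:
  fixes v :: "real vec"
  assumes v: "v \<in> carrier_vec n" and v1: "v \<bullet> v = 1"
  obtains W where "orthonormal_mat n W" "col W 0 = v"
proof -
  have v0: "v \<noteq> 0\<^sub>v n"
    using v1 by auto
  then have n: "0 < n"
    using v by (cases n) auto
  interpret cof_vec_space n "TYPE(real)" .
  define b where "b = basis_completion v"
  from basis_completion[OF v v0, folded b_def]
  have b: "distinct b" "\<not> lin_dep (set b)" "set b \<subseteq> carrier_vec n" "hd b = v" "length b = n"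
    by auto
  with n obtain bs where bv: "b = v # bs"
    by (cases b) auto
  define ws where "ws = gram_schmidt n b"
  from gram_schmidt_result[OF b(3,1,2) refl, folded ws_def]
  have ws: "set ws \<subseteq> carrier_vec n" "corthogonal ws" "length ws = n"
    by (auto simp: b(5))
  have "ws ! 0 = v"
    using gram_schmidt_hd[OF v, of bs] ws(3) n unfolding ws_def[symmetric] bv[symmetric]
    by (cases ws) auto
  then show ?thesis
    using orthonormal_mat_normalize_cols[OF ws] n v1 v by (intro that) auto
qed

lemma orthonormal_mat_four_block:
  assumes U: "orthonormal_mat m U"
  shows "orthonormal_mat (Suc m) (four_block_mat (1\<^sub>m 1) (0\<^sub>m 1 m) (0\<^sub>m m 1) U)"
proof -
  note U = orthonormal_matD[OF U]
  have "transpose_mat (four_block_mat (1\<^sub>m 1) (0\<^sub>m 1 m) (0\<^sub>m m 1) U) =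
      four_block_mat (1\<^sub>m 1) (0\<^sub>m 1 m) (0\<^sub>m m 1) (transpose_mat U)"
    using U by (subst transpose_four_block_mat[of _ 1 1 _ m _ m]) auto
  then show ?thesis
    using U unfolding orthonormal_mat_def
    by (auto simp: mult_four_block_mat[of _ 1 1 _ m _ m _ _ 1 _ m])
qed

lemma orthonormal_mat_conj_col_eigenvector:
  assumes W: "orthonormal_mat n W" and n: "0 < n" and W0: "col W 0 = v"
    and A: "A \<in> carrier_mat n n" and v: "v \<in> carrier_vec n" and Av: "A *\<^sub>v v = \<alpha> \<cdot>\<^sub>v v"
  shows "col (transpose_mat W * A * W) 0 = \<alpha> \<cdot>\<^sub>v unit_vec n 0"
proof -
  note W = orthonormal_matD[OF W]
  have "col (transpose_mat W * A * W) 0 = (transpose_mat W * A) *\<^sub>v v"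
    using col_mult2[of "transpose_mat W * A" n n W n 0] W A n W0 by simp
  also have "\<dots> = \<alpha> \<cdot>\<^sub>v (transpose_mat W *\<^sub>v col W 0)"
    using W A v by (simp add: Av W0 mult_mat_vec)
  also have "transpose_mat W *\<^sub>v col W 0 = col (transpose_mat W * W) 0"
    using col_mult2[of "transpose_mat W" n n W n 0] W n by simp
  finally show ?thesis
    using W n by simp
qed

lemma symmetric_mat_four_block_first_col:
  fixes B :: "real mat"
  assumes B: "B \<in> carrier_mat (Suc m) (Suc m)" and sym: "transpose_mat B = B"
    and B0: "col B 0 = \<alpha> \<cdot>\<^sub>v unit_vec (Suc m) 0"
  shows "B = four_block_mat (mat 1 1 (\<lambda>_. \<alpha>)) (0\<^sub>m 1 m) (0\<^sub>m m 1)
    (mat m m (\<lambda>(i, j). B $$ (Suc i, Suc j)))"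
proof -
  have Bi0: "B $$ (i, 0) = (if i = 0 then \<alpha> else 0)" if "i < Suc m" for i
    using arg_cong[OF B0, of "\<lambda>c. c $ i"] B that by auto
  have B0j: "B $$ (0, j) = (if j = 0 then \<alpha> else 0)" if "j < Suc m" for j
    using Bi0[OF that] arg_cong[OF sym, of "\<lambda>M. M $$ (j, 0)"] B that by auto
  show ?thesis
    using B Bi0 B0j by (intro eq_matI) (auto simp: less_Suc_eq_0_disj)
qed

lemma four_block_orthonormal_diag:
  assumes U: "orthonormal_mat m U"
  defines "F \<equiv> four_block_mat (1\<^sub>m 1) (0\<^sub>m 1 m) (0\<^sub>m m 1) U"
  shows "four_block_mat (mat 1 1 (\<lambda>_. \<alpha>)) (0\<^sub>m 1 m) (0\<^sub>m m 1) (U * diagm m d * transpose_mat U) =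
    F * diagm (Suc m) (\<lambda>i. if i = 0 then \<alpha> else d (i - 1)) * transpose_mat F"
proof -
  note U = orthonormal_matD[OF U]
  have D: "diagm (Suc m) (\<lambda>i. if i = 0 then \<alpha> else d (i - 1)) =
      four_block_mat (mat 1 1 (\<lambda>_. \<alpha>)) (0\<^sub>m 1 m) (0\<^sub>m m 1) (diagm m d)"
    by (intro eq_matI) (auto simp: diagm_def)
  have Ft: "transpose_mat F = four_block_mat (1\<^sub>m 1) (0\<^sub>m 1 m) (0\<^sub>m m 1) (transpose_mat U)"
    using U unfolding F_def by (subst transpose_four_block_mat[of _ 1 1 _ m _ m]) auto
  have "U * diagm m d * transpose_mat U \<in> carrier_mat m m"
    using U by (metis diagm_carrier mult_carrier_mat)
  then show ?thesis
    unfolding D Ft unfolding F_def using U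
    by (simp add: mult_four_block_mat[of _ 1 1 _ m _ m _ _ 1 _ m] left_mult_zero_mat[of _ m m]
        right_mult_zero_mat[of _ m m] left_add_zero_mat[of _ m m])
qed

theorem symmetric_real_mat_spectral:
  fixes A :: "real mat"
  assumes "A \<in> carrier_mat n n" "transpose_mat A = A"
  shows "\<exists>U d. orthonormal_mat n U \<and> A = U * diagm n d * transpose_mat U"
  using assms
proof (induction n arbitrary: A)
  case 0
  then show ?case
    by (intro exI[of _ "1\<^sub>m 0"]) (auto simp: orthonormal_mat_def intro!: eq_matI)
next
  case (Suc m A)
  obtain \<alpha> v where v: "v \<in> carrier_vec (Suc m)" "v \<bullet> v = 1" "A *\<^sub>v v = \<alpha> \<cdot>\<^sub>v v"
    using symmetric_real_mat_unit_eigenvector[OF Suc.prems] by blast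
  obtain W where W: "orthonormal_mat (Suc m) W" "col W 0 = v"
    using orthonormal_mat_extension[OF v(1,2)] by blast
  note W' = orthonormal_matD[OF W(1)]
  define B where "B = transpose_mat W * A * W"
  have B: "B \<in> carrier_mat (Suc m) (Suc m)" "transpose_mat B = B"
    using W' Suc.prems symmetric_congruence[of W "Suc m" "Suc m" A] by (auto simp: B_def)
  have A_B: "A = W * B * transpose_mat W"
    using W' Suc.prems orthonormal_mat_cancel[OF W(1), of A]
    by (simp add: B_def assoc_mult_mat[of _ "Suc m" "Suc m" _ "Suc m" _ "Suc m"])
  define A3 where "A3 = mat m m (\<lambda>(i, j). B $$ (Suc i, Suc j))"
  have "B $$ (j, i) = B $$ (i, j)" if "i < Suc m" "j < Suc m" for i j
    using arg_cong[OF B(2), of "\<lambda>M. M $$ (i, j)"] B(1) that by simp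
  then have "transpose_mat A3 = A3"
    by (auto simp: A3_def intro!: eq_matI)
  then obtain U3 d3 where U3: "orthonormal_mat m U3" and A3: "A3 = U3 * diagm m d3 * transpose_mat U3"
    using Suc.IH[of A3] by (auto simp: A3_def)
  define F where "F = four_block_mat (1\<^sub>m 1) (0\<^sub>m 1 m) (0\<^sub>m m 1) U3"
  define d where "d = (\<lambda>i. if i = 0 then \<alpha> else d3 (i - 1))"
  have "B = F * diagm (Suc m) d * transpose_mat F"
    using symmetric_mat_four_block_first_col[OF B
        orthonormal_mat_conj_col_eigenvector[OF W(1) _ W(2) Suc.prems(1) v(1,3), folded B_def]]
      four_block_orthonormal_diag[OF U3]
    by (simp add: A3_def[symmetric] A3 F_def d_def)
  then have "A = (W * F) * diagm (Suc m) d * transpose_mat (W * F)"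
    using W' orthonormal_matD[OF orthonormal_mat_four_block[OF U3], folded F_def] A_B
    by (simp add: transpose_mult[of _ "Suc m" "Suc m"] mult_carrier_mat[of _ "Suc m" "Suc m"]
        assoc_mult_mat[of _ "Suc m" "Suc m" _ "Suc m" _ "Suc m"])
  then show ?case
    using orthonormal_mat_mult[OF W(1) orthonormal_mat_four_block[OF U3]] F_def by blast
qed

section \<open>Extreme eigenvalues and Rayleigh quotients\<close>

lemma quadratic_form_orthonormal_diag:
  assumes U: "orthonormal_mat n U" and v: "v \<in> carrier_vec n"
  shows "v \<bullet> ((U * diagm n d * transpose_mat U) *\<^sub>v v) =
    (\<Sum>i<n. d i * ((transpose_mat U *\<^sub>v v) $ i)\<^sup>2)"
proof -
  note U = orthonormal_matD[OF U]
  let ?w = "transpose_mat U *\<^sub>v v"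
  have "v \<bullet> ((U * diagm n d * transpose_mat U) *\<^sub>v v) = v \<bullet> (U *\<^sub>v (diagm n d *\<^sub>v ?w))"
    using U v by (simp add: assoc_mult_mat_vec[of _ n n _ n])
  also have "\<dots> = ?w \<bullet> (diagm n d *\<^sub>v ?w)"
    using transpose_vec_mult_scalar[of U n n "diagm n d *\<^sub>v ?w" v] U v
      mult_mat_vec_carrier[of "diagm n d" n n ?w] by simp
  finally show ?thesis
    using U v by (simp add: quadratic_form_diagm)
qed

lemma sum_square_orthonormal_transpose:
  assumes U: "orthonormal_mat n U" and v: "v \<in> carrier_vec n"
  shows "(\<Sum>i<n. ((transpose_mat U *\<^sub>v v) $ i)\<^sup>2) = v \<bullet> v"
  using quadratic_form_orthonormal_diag[OF U v, of "\<lambda>_. 1"] orthonormal_matD[OF U] v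
  by (simp add: diagm_def flip: one_mat_def)

lemma eigenvalue_orthonormal_diag:
  assumes U: "orthonormal_mat n U" and i: "i < n"
  shows "eigenvalue (U * diagm n d * transpose_mat U) (d i)"
proof -
  note U = orthonormal_matD[OF U]
  have Ut_col: "transpose_mat U *\<^sub>v col U i = unit_vec n i"
    using col_mult2[of "transpose_mat U" n n U n i] U i by simp
  have U_unit: "U *\<^sub>v unit_vec n i = col U i"
    using col_mult2[of U n n "1\<^sub>m n" n i] U i by simp
  have "diagm n d *\<^sub>v unit_vec n i = d i \<cdot>\<^sub>v unit_vec n i"
    using i by (auto simp: diagm_mult_vec)
  then have "(U * diagm n d * transpose_mat U) *\<^sub>v col U i = d i \<cdot>\<^sub>v col U i"
    using U i by (simp add: assoc_mult_mat_vec[of _ n n _ n] Ut_col mult_mat_vec U_unit)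
  moreover have "col U i \<bullet> col U i = 1"
    using arg_cong[OF U(3), of "\<lambda>M. M $$ (i, i)"] U(1) i by simp
  ultimately show ?thesis
    using U unfolding eigenvalue_def eigenvector_def by (auto intro!: exI[of _ "col U i"])
qed

lemma finite_eigenvalues:
  fixes A :: "'a::field mat"
  assumes "A \<in> carrier_mat n n"
  shows "finite {k. eigenvalue A k}"
proof -
  have "char_poly A \<noteq> 0"
    using degree_monic_char_poly[OF assms] by auto
  then show ?thesis
    using poly_roots_finite eigenvalue_root_char_poly[OF assms] by simp
qed

lemma lam_min_max_eigenvalue:
  fixes A :: "real mat"
  assumes A: "A \<in> carrier_mat n n" and k: "eigenvalue A k"
  shows "lam_min A \<le> k" "k \<le> lam_max A"
    "eigenvalue A (lam_min A)" "eigenvalue A (lam_max A)"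
proof -
  have "finite {k. eigenvalue A k}" "{k. eigenvalue A k} \<noteq> {}"
    using finite_eigenvalues[OF A] k by auto
  then show "lam_min A \<le> k" "k \<le> lam_max A" "eigenvalue A (lam_min A)" "eigenvalue A (lam_max A)"
    using k Min_in Max_in unfolding lam_min_def lam_max_def by auto
qed

lemma symmetric_real_mat_rayleigh:
  fixes A :: "real mat"
  assumes A: "A \<in> carrier_mat n n" and sym: "transpose_mat A = A" and v: "v \<in> carrier_vec n"
  shows "lam_min A * (v \<bullet> v) \<le> v \<bullet> (A *\<^sub>v v)" "v \<bullet> (A *\<^sub>v v) \<le> lam_max A * (v \<bullet> v)"
proof -
  obtain U d where U: "orthonormal_mat n U" and AU: "A = U * diagm n d * transpose_mat U"
    using symmetric_real_mat_spectral[OF A sym] by blast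
  define w where "w = transpose_mat U *\<^sub>v v"
  have d: "lam_min A \<le> d i" "d i \<le> lam_max A" if "i < n" for i
    using lam_min_max_eigenvalue[OF A] eigenvalue_orthonormal_diag[OF U that] AU by auto
  have "lam_min A * (v \<bullet> v) = (\<Sum>i<n. lam_min A * (w $ i)\<^sup>2)"
    by (simp add: w_def sum_square_orthonormal_transpose[OF U v] flip: sum_distrib_left)
  also have "\<dots> \<le> (\<Sum>i<n. d i * (w $ i)\<^sup>2)"
    by (intro sum_mono mult_right_mono) (auto simp: d)
  finally show "lam_min A * (v \<bullet> v) \<le> v \<bullet> (A *\<^sub>v v)"
    by (simp add: AU quadratic_form_orthonormal_diag[OF U v] w_def)
  have "(\<Sum>i<n. d i * (w $ i)\<^sup>2) \<le> (\<Sum>i<n. lam_max A * (w $ i)\<^sup>2)"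
    by (intro sum_mono mult_right_mono) (auto simp: d)
  also have "\<dots> = lam_max A * (v \<bullet> v)"
    by (simp add: w_def sum_square_orthonormal_transpose[OF U v] flip: sum_distrib_left)
  finally show "v \<bullet> (A *\<^sub>v v) \<le> lam_max A * (v \<bullet> v)"
    by (simp add: AU quadratic_form_orthonormal_diag[OF U v] w_def)
qed

lemma symmetric_real_mat_lam_bounds:
  fixes A :: "real mat"
  assumes A: "A \<in> carrier_mat n n" and sym: "transpose_mat A = A" and n: "0 < n"
    and lower: "\<And>v. v \<in> carrier_vec n \<Longrightarrow> a * (v \<bullet> v) \<le> v \<bullet> (A *\<^sub>v v)"
    and upper: "\<And>v. v \<in> carrier_vec n \<Longrightarrow> v \<bullet> (A *\<^sub>v v) \<le> b * (v \<bullet> v)"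
  shows "a \<le> lam_min A" "lam_min A \<le> lam_max A" "lam_max A \<le> b"
proof -
  have eigen_bounds: "a \<le> k \<and> k \<le> b" if k: "eigenvalue A k" for k
  proof -
    obtain v where v: "v \<in> carrier_vec n" "v \<noteq> 0\<^sub>v n" "A *\<^sub>v v = k \<cdot>\<^sub>v v"
      using k A unfolding eigenvalue_def eigenvector_def by auto
    have "0 < v \<bullet> v"
      using scalar_prod_self_pos[OF v(1,2)] .
    then show ?thesis
      using lower[OF v(1)] upper[OF v(1)] v by simp
  qed
  obtain k where k: "eigenvalue A k"
    using symmetric_real_mat_has_eigenvalue[OF A sym n] by blast
  show "a \<le> lam_min A" "lam_max A \<le> b"
    using eigen_bounds lam_min_max_eigenvalue(3,4)[OF A k] by auto
  show "lam_min A \<le> lam_max A"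
    using lam_min_max_eigenvalue(1)[OF A lam_min_max_eigenvalue(4)[OF A k]] .
qed

lemma pos_def_mat_if_lam_min_pos:
  fixes A :: "real mat"
  assumes A: "A \<in> carrier_mat n n" and sym: "transpose_mat A = A" and pos: "0 < lam_min A"
  shows "pos_def_mat A n"
  using A sym symmetric_real_mat_rayleigh(1)[OF A sym] scalar_prod_self_pos[of _ n] pos
  unfolding pos_def_mat_def by (meson mult_pos_pos order_less_le_trans)

section \<open>Inverse square roots of positive definite matrices\<close>

lemma symmetric_real_mat_eq_zero:
  fixes A :: "real mat"
  assumes A: "A \<in> carrier_mat n n" and sym: "transpose_mat A = A"
    and eigen: "\<And>k. eigenvalue A k \<Longrightarrow> k = 0"
  shows "A = 0\<^sub>m n n"
proof -
  obtain U d where U: "orthonormal_mat n U" and AU: "A = U * diagm n d * transpose_mat U"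
    using symmetric_real_mat_spectral[OF A sym] by blast
  have "diagm n d = 0\<^sub>m n n"
    using eigen eigenvalue_orthonormal_diag[OF U] by (auto simp: diagm_def AU intro!: eq_matI)
  then show ?thesis
    using AU orthonormal_matD[OF U] by simp
qed

lemma pos_def_mat_equal_squares_eigenvalue_diff:
  assumes S: "pos_def_mat S n" and T: "pos_def_mat T n" and ST: "S * S = T * T"
    and \<mu>: "eigenvalue (S - T) \<mu>"
  shows "\<mu> = 0"
proof -
  have S': "S \<in> carrier_mat n n" "transpose_mat S = S"
    "\<And>v. v \<in> carrier_vec n \<Longrightarrow> v \<noteq> 0\<^sub>v n \<Longrightarrow> 0 < v \<bullet> (S *\<^sub>v v)"
    using S unfolding pos_def_mat_def by auto
  have T': "T \<in> carrier_mat n n" "transpose_mat T = T"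
    "\<And>v. v \<in> carrier_vec n \<Longrightarrow> v \<noteq> 0\<^sub>v n \<Longrightarrow> 0 < v \<bullet> (T *\<^sub>v v)"
    using T unfolding pos_def_mat_def by auto
  obtain w where w: "w \<in> carrier_vec n" "w \<noteq> 0\<^sub>v n" "(S - T) *\<^sub>v w = \<mu> \<cdot>\<^sub>v w"
    using \<mu> S'(1) T'(1) unfolding eigenvalue_def eigenvector_def by auto
  define a where "a = S *\<^sub>v w"
  define b where "b = T *\<^sub>v w"
  have ab: "a \<in> carrier_vec n" "b \<in> carrier_vec n" "a - b = \<mu> \<cdot>\<^sub>v w"
    using S'(1) T'(1) w by (auto simp: a_def b_def minus_mult_distrib_mat_vec)
  have "a \<bullet> a = w \<bullet> ((S * S) *\<^sub>v w)" "b \<bullet> b = w \<bullet> ((T * T) *\<^sub>v w)"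
    using symmetric_mat_scalar_prod_swap[OF S'(1,2) w(1) ab(1)]
      symmetric_mat_scalar_prod_swap[OF T'(1,2) w(1) ab(2)] S'(1) T'(1) w(1)
    by (auto simp: a_def b_def assoc_mult_mat_vec[of _ n n _ n])
  then have "a \<bullet> a = b \<bullet> b"
    by (simp add: ST)
  moreover have "\<mu> * (w \<bullet> a + w \<bullet> b) = (a - b) \<bullet> (a + b)"
    using ab w(1) by (simp add: scalar_prod_add_distrib[of _ n] distrib_left)
  moreover have "(a - b) \<bullet> (a + b) = a \<bullet> a - b \<bullet> b"
    using ab(1,2) by (simp add: minus_scalar_prod_distrib[of _ n] scalar_prod_add_distrib[of _ n]
        comm_scalar_prod[of b n a])
  moreover have "0 < w \<bullet> a" "0 < w \<bullet> b"
    using S'(3) T'(3) w by (auto simp: a_def b_def)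
  ultimately show "\<mu> = 0"
    by simp
qed

lemma pos_def_mat_square_unique:
  assumes S: "pos_def_mat S n" and T: "pos_def_mat T n" and ST: "S * S = T * T"
  shows "S = T"
proof -
  have ST_carrier: "S \<in> carrier_mat n n" "T \<in> carrier_mat n n"
    using S T unfolding pos_def_mat_def by auto
  have zero: "S - T = 0\<^sub>m n n"
    using S T pos_def_mat_equal_squares_eigenvalue_diff[OF S T ST]
    by (intro symmetric_real_mat_eq_zero) (auto simp: pos_def_mat_def transpose_minus)
  show ?thesis
  proof (rule eq_matI)
    fix i j assume "i < dim_row T" "j < dim_col T"
    then show "S $$ (i, j) = T $$ (i, j)"
      using arg_cong[OF zero, of "\<lambda>M. M $$ (i, j)"] ST_carrier by simp
  qed (use ST_carrier in auto)
qed

lemma orthonormal_diag_mult: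
  assumes U: "orthonormal_mat n U"
  shows "(U * diagm n e * transpose_mat U) * (U * diagm n f * transpose_mat U) =
    U * diagm n (\<lambda>i. e i * f i) * transpose_mat U"
proof -
  note U' = orthonormal_matD[OF U]
  have "transpose_mat U * (U * (diagm n f * transpose_mat U)) = diagm n f * transpose_mat U"
    using orthonormal_mat_cancel(1)[OF U, of "diagm n f * transpose_mat U" n] U'
    by (simp add: mult_carrier_mat[of _ n n])
  then have "(U * diagm n e * transpose_mat U) * (U * diagm n f * transpose_mat U) =
      U * (diagm n e * diagm n f) * transpose_mat U"
    using U' by (simp add: mult_carrier_mat[of _ n n] assoc_mult_mat[of _ n n _ n _ n])
  then show ?thesis
    by (simp add: diagm_mult)
qed

lemma pos_def_mat_eigenvalue_pos:
  assumes H: "pos_def_mat H n" and k: "eigenvalue H k"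
  shows "0 < k"
proof -
  obtain v where v: "v \<in> carrier_vec n" "v \<noteq> 0\<^sub>v n" "H *\<^sub>v v = k \<cdot>\<^sub>v v"
    using H k unfolding pos_def_mat_def eigenvalue_def eigenvector_def by auto
  then have "0 < k * (v \<bullet> v)"
    using H unfolding pos_def_mat_def by force
  then show ?thesis
    using scalar_prod_self_nonneg[of v] by (simp add: zero_less_mult_iff)
qed

lemma pos_def_mat_orthonormal_diag:
  assumes U: "orthonormal_mat n U" and e: "\<And>i. i < n \<Longrightarrow> 0 < e i"
  shows "pos_def_mat (U * diagm n e * transpose_mat U) n"
proof -
  note U' = orthonormal_matD[OF U]
  have "0 < v \<bullet> ((U * diagm n e * transpose_mat U) *\<^sub>v v)"
    if v: "v \<in> carrier_vec n" "v \<noteq> 0\<^sub>v n" for v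
  proof (rule ccontr)
    let ?w = "transpose_mat U *\<^sub>v v"
    have nonneg: "0 \<le> e i * (?w $ i)\<^sup>2" if "i < n" for i
      using e[OF that] by simp
    have "0 \<le> (\<Sum>i<n. e i * (?w $ i)\<^sup>2)"
      using nonneg by (intro sum_nonneg) auto
    moreover assume "\<not> 0 < v \<bullet> ((U * diagm n e * transpose_mat U) *\<^sub>v v)"
    ultimately have "(\<Sum>i<n. e i * (?w $ i)\<^sup>2) = 0"
      using quadratic_form_orthonormal_diag[OF U v(1), of e] by simp
    then have "\<forall>i\<in>{..<n}. e i * (?w $ i)\<^sup>2 = 0"
      using sum_nonneg_eq_0_iff[of "{..<n}" "\<lambda>i. e i * (?w $ i)\<^sup>2"] nonneg by simp
    then have "?w $ i = 0" if "i < n" for i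
      using e[OF that] that by force
    then have "v \<bullet> v = 0"
      by (simp flip: sum_square_orthonormal_transpose[OF U v(1)])
    then show False
      using scalar_prod_self_pos[OF v] by simp
  qed
  then show ?thesis
    using U' symmetric_congruence[of "transpose_mat U" n n "diagm n e"]
    unfolding pos_def_mat_def by auto
qed

lemma pos_def_mat_inv_sqrt_exists:
  fixes H :: "real mat"
  assumes H: "pos_def_mat H n"
  shows "\<exists>S. pos_def_mat S n \<and> S * S * H = 1\<^sub>m n"
proof -
  have Hc: "H \<in> carrier_mat n n" "transpose_mat H = H"
    using H unfolding pos_def_mat_def by auto
  obtain U d where U: "orthonormal_mat n U" and HU: "H = U * diagm n d * transpose_mat U"
    using symmetric_real_mat_spectral[OF Hc] by blast
  have d: "0 < d i" if "i < n" for i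
    using pos_def_mat_eigenvalue_pos[OF H] eigenvalue_orthonormal_diag[OF U that] HU by simp
  define e where "e i = 1 / sqrt (d i)" for i
  define S where "S = U * diagm n e * transpose_mat U"
  have "S * S * H = U * diagm n (\<lambda>i. e i * e i * d i) * transpose_mat U"
    by (simp add: S_def HU orthonormal_diag_mult[OF U])
  also have "diagm n (\<lambda>i. e i * e i * d i) = 1\<^sub>m n"
    using d by (auto simp: diagm_def e_def less_imp_le intro!: eq_matI) (metis less_irrefl)
  finally have "S * S * H = 1\<^sub>m n"
    using orthonormal_matD[OF U] by simp
  moreover have "pos_def_mat S n"
    unfolding S_def using d by (intro pos_def_mat_orthonormal_diag[OF U]) (simp add: e_def)
  ultimately show ?thesis
    by blast
qed

lemma inv_sqrt:
  assumes H: "pos_def_mat H n"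
  shows "pos_def_mat (inv_sqrt H) n" "inv_sqrt H * inv_sqrt H * H = 1\<^sub>m n"
proof -
  have Hc: "H \<in> carrier_mat n n"
    using H unfolding pos_def_mat_def by auto
  have "S = T" if S: "pos_def_mat S n" "S * S * H = 1\<^sub>m n" and T: "pos_def_mat T n" "T * T * H = 1\<^sub>m n"
    for S T
  proof (rule pos_def_mat_square_unique[OF S(1) T(1)])
    have Sc: "S \<in> carrier_mat n n" and Tc: "T \<in> carrier_mat n n"
      using S T unfolding pos_def_mat_def by auto
    have "H * (T * T) = 1\<^sub>m n"
      using mat_mult_left_right_inverse[of "T * T" n H] T(2) Tc Hc by simp
    then have "S * S = (S * S * H) * (T * T)"
      using Sc Tc Hc by (simp add: mult_carrier_mat[of _ n n] assoc_mult_mat[of _ n n _ n _ n])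
    then show "S * S = T * T"
      using S(2) Tc by simp
  qed
  then have "pos_def_mat (inv_sqrt H) n \<and> inv_sqrt H * inv_sqrt H * H = 1\<^sub>m n"
    using pos_def_mat_inv_sqrt_exists[OF H] Hc unfolding inv_sqrt_def
    by (metis (mono_tags, lifting) carrier_matD(1) theI)
  then show "pos_def_mat (inv_sqrt H) n" "inv_sqrt H * inv_sqrt H * H = 1\<^sub>m n"
    by auto
qed

lemma lam_max_whitened_ge_one:
  fixes H M :: "real mat"
  assumes H: "pos_def_mat H n" and n: "0 < n"
    and M: "M \<in> carrier_mat n n" "transpose_mat M = M"
    and HM: "\<And>v. v \<in> carrier_vec n \<Longrightarrow> v \<bullet> (H *\<^sub>v v) \<le> v \<bullet> (M *\<^sub>v v)"
  shows "1 \<le> lam_max (inv_sqrt H * M * inv_sqrt H)"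
proof -
  define S where "S = inv_sqrt H"
  have S: "S \<in> carrier_mat n n" "transpose_mat S = S" and SSH: "S * S * H = 1\<^sub>m n"
    using inv_sqrt[OF H] unfolding S_def pos_def_mat_def by auto
  have Hc: "H \<in> carrier_mat n n"
    using H unfolding pos_def_mat_def by auto
  have SHS: "S * H * S = 1\<^sub>m n"
    using mat_mult_left_right_inverse[of S n "S * H"] SSH S Hc
    by (simp add: assoc_mult_mat[of _ n n _ n _ n])
  define u :: "real vec" where "u = unit_vec n 0"
  have u: "u \<in> carrier_vec n" "u \<bullet> u = 1"
    using n by (auto simp: u_def)
  have quad: "u \<bullet> ((S * A * S) *\<^sub>v u) = (S *\<^sub>v u) \<bullet> (A *\<^sub>v (S *\<^sub>v u))"
    if "A \<in> carrier_mat n n" for A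
    using quadratic_form_congruence[OF S(1) that u(1)] S(2) by simp
  have "1 = u \<bullet> ((S * H * S) *\<^sub>v u)"
    using u by (simp add: SHS)
  also have "\<dots> \<le> u \<bullet> ((S * M * S) *\<^sub>v u)"
    using HM[of "S *\<^sub>v u"] S u by (simp add: quad Hc M)
  also have "\<dots> \<le> lam_max (S * M * S) * (u \<bullet> u)"
    using symmetric_real_mat_rayleigh(2)[of "S * M * S" n u] symmetric_congruence[OF S(1) M] S M u
    by simp
  finally show ?thesis
    using u by (simp add: S_def)
qed

section \<open>The softmax Hessian\<close>

definition weighted_variance :: "nat \<Rightarrow> (nat \<Rightarrow> real) \<Rightarrow> (nat \<Rightarrow> real) \<Rightarrow> real" where
  "weighted_variance p a y = (\<Sum>j<p. a j * (y j)\<^sup>2) - (\<Sum>j<p. a j * y j)\<^sup>2"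

lemma weighted_variance_shift:
  assumes "(\<Sum>j<p. a j) = 1"
  shows "(\<Sum>j<p. a j * (y j - c)\<^sup>2) = weighted_variance p a y + ((\<Sum>j<p. a j * y j) - c)\<^sup>2"
proof -
  have "(\<Sum>j<p. a j * (y j - c)\<^sup>2) = (\<Sum>j<p. a j * (y j)\<^sup>2 - 2 * c * (a j * y j) + c\<^sup>2 * a j)"
    by (rule sum.cong) (auto simp: power2_eq_square algebra_simps)
  also have "\<dots> = (\<Sum>j<p. a j * (y j)\<^sup>2) - 2 * c * (\<Sum>j<p. a j * y j) + c\<^sup>2"
    using assms by (simp add: sum.distrib sum_subtractf flip: sum_distrib_left)
  finally show ?thesis
    by (simp add: weighted_variance_def power2_eq_square algebra_simps)
qed

lemma weighted_variance_le_mult: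
  assumes a: "(\<Sum>j<p. a j) = 1" and b: "(\<Sum>j<p. b j) = 1"
    and ab: "\<And>j. j < p \<Longrightarrow> a j \<le> E * b j"
  shows "weighted_variance p a y \<le> E * weighted_variance p b y"
proof -
  define m where "m = (\<Sum>j<p. b j * y j)"
  have "weighted_variance p a y \<le> (\<Sum>j<p. a j * (y j - m)\<^sup>2)"
    by (simp add: weighted_variance_shift[OF a])
  also have "\<dots> \<le> (\<Sum>j<p. E * b j * (y j - m)\<^sup>2)"
    by (intro sum_mono mult_right_mono) (auto simp: ab)
  also have "\<dots> = E * weighted_variance p b y"
    by (simp add: weighted_variance_shift[OF b] m_def mult.assoc flip: sum_distrib_left)
  finally show ?thesis .
qed

lemma sum_softmax:
  assumes "0 < dim_row X"
  shows "(\<Sum>j<dim_row X. softmax X \<theta> j) = 1"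
proof -
  have "0 < (\<Sum>l<dim_row X. exp (row X l \<bullet> \<theta>))"
    using assms by (intro sum_pos) auto
  then show ?thesis
    by (simp add: softmax_def flip: sum_divide_distrib)
qed

lemma vnorm_row_le_Xnorm:
  assumes "j < dim_row X"
  shows "vnorm (row X j) \<le> Xnorm X"
  unfolding Xnorm_def using assms by (intro Max_ge) auto

lemma Xnorm_nonneg:
  assumes "0 < dim_row X"
  shows "0 \<le> Xnorm X"
  using vnorm_row_le_Xnorm[OF assms] vnorm_nonneg order_trans by blast

lemma softmax_le_exp_mult:
  fixes X :: "real mat"
  assumes X: "X \<in> carrier_mat p L" and p: "0 < p"
    and \<theta>: "\<theta> \<in> carrier_vec L" and \<theta>': "\<theta>' \<in> carrier_vec L" and j: "j < p"
  shows "softmax X \<theta> j \<le> exp (2 * (Xnorm X * vnorm (\<theta> - \<theta>'))) * softmax X \<theta>' j"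
proof -
  define r where "r = Xnorm X * vnorm (\<theta> - \<theta>')"
  have shift: "row X l \<bullet> \<theta> = row X l \<bullet> \<theta>' + row X l \<bullet> (\<theta> - \<theta>')"
    and bound: "\<bar>row X l \<bullet> (\<theta> - \<theta>')\<bar> \<le> r" if "l < p" for l
  proof -
    show "row X l \<bullet> \<theta> = row X l \<bullet> \<theta>' + row X l \<bullet> (\<theta> - \<theta>')"
      using that X \<theta> \<theta>' by (simp add: scalar_prod_minus_distrib[of _ L])
    have "\<bar>row X l \<bullet> (\<theta> - \<theta>')\<bar> \<le> vnorm (row X l) * vnorm (\<theta> - \<theta>')"
      using that X \<theta> \<theta>' by (intro abs_scalar_prod_le_vnorm[of _ L]) auto
    also have "\<dots> \<le> r"
      unfolding r_def using vnorm_row_le_Xnorm[of l X] that X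
      by (intro mult_right_mono) (auto simp: vnorm_nonneg)
    finally show "\<bar>row X l \<bullet> (\<theta> - \<theta>')\<bar> \<le> r" .
  qed
  have upper: "exp (row X l \<bullet> \<theta>) \<le> exp r * exp (row X l \<bullet> \<theta>')"
    and lower: "exp (- r) * exp (row X l \<bullet> \<theta>') \<le> exp (row X l \<bullet> \<theta>)" if "l < p" for l
    using shift[OF that] bound[OF that] by (simp_all flip: exp_add)
  define Z where "Z \<theta> = (\<Sum>l<p. exp (row X l \<bullet> \<theta>))" for \<theta>
  have Z_pos: "0 < Z \<theta>'"
    unfolding Z_def using p by (intro sum_pos) auto
  have Z_lower: "exp (- r) * Z \<theta>' \<le> Z \<theta>"
    unfolding Z_def sum_distrib_left by (intro sum_mono lower) auto
  have "softmax X \<theta> j = exp (row X j \<bullet> \<theta>) / Z \<theta>"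
    using X by (simp add: softmax_def Z_def)
  also have "\<dots> \<le> (exp r * exp (row X j \<bullet> \<theta>')) / (exp (- r) * Z \<theta>')"
    using upper[OF j] Z_lower Z_pos by (intro frac_le) auto
  also have "\<dots> = exp (2 * r) * softmax X \<theta>' j"
    using X by (simp add: softmax_def Z_def exp_minus field_simps flip: exp_add)
  finally show ?thesis
    unfolding r_def .
qed

lemma diag_minus_outer_carrier_symmetric:
  "diagm p a - mat p p (\<lambda>(i, j). a i * a j) \<in> carrier_mat p p"
  "transpose_mat (diagm p a - mat p p (\<lambda>(i, j). a i * a j)) = diagm p a - mat p p (\<lambda>(i, j). a i * a j)"
  by (auto simp: diagm_def intro!: eq_matI)

lemma quadratic_form_diag_minus_outer:
  assumes y: "y \<in> carrier_vec p"
  shows "y \<bullet> ((diagm p a - mat p p (\<lambda>(i, j). a i * a j)) *\<^sub>v y) =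
    weighted_variance p a (\<lambda>j. y $ j)"
proof -
  define m where "m = (\<Sum>j<p. a j * y $ j)"
  have "mat p p (\<lambda>(i, j). a i * a j) *\<^sub>v y = m \<cdot>\<^sub>v vec p a"
    using y by (intro eq_vecI)
      (auto simp: m_def scalar_prod_def sum_distrib_left lessThan_atLeast0 ac_simps)
  then have "(diagm p a - mat p p (\<lambda>(i, j). a i * a j)) *\<^sub>v y =
      diagm p a *\<^sub>v y - m \<cdot>\<^sub>v vec p a"
    using y by (simp add: minus_mult_distrib_mat_vec[of _ p p])
  moreover have "y \<bullet> vec p a = m"
    using y by (simp add: m_def scalar_prod_def lessThan_atLeast0 mult.commute)
  ultimately show ?thesis
    using y mult_mat_vec_carrier[OF diagm_carrier y, of a]
    by (simp add: quadratic_form_diagm scalar_prod_minus_distrib[of _ p]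
        weighted_variance_def m_def power2_eq_square)
qed

lemma Hmat_carrier_symmetric:
  assumes X: "X \<in> carrier_mat p L"
  shows "Hmat X \<theta> \<in> carrier_mat L L" "transpose_mat (Hmat X \<theta>) = Hmat X \<theta>"
  using X symmetric_congruence[OF X diag_minus_outer_carrier_symmetric]
  by (auto simp: Hmat_def)

lemma Mmat_carrier_symmetric:
  assumes X: "X \<in> carrier_mat p L"
  shows "Mmat X \<theta> \<in> carrier_mat L L" "transpose_mat (Mmat X \<theta>) = Mmat X \<theta>"
  using X symmetric_congruence[OF X, of "diagm p (softmax X \<theta>)"] by (auto simp: Mmat_def)

lemma quadratic_form_Hmat:
  assumes X: "X \<in> carrier_mat p L" and v: "v \<in> carrier_vec L"
  shows "v \<bullet> (Hmat X \<theta> *\<^sub>v v) = weighted_variance p (softmax X \<theta>) (\<lambda>j. (X *\<^sub>v v) $ j)"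
  using X v quadratic_form_congruence[OF X diag_minus_outer_carrier_symmetric(1) v]
  by (simp add: Hmat_def quadratic_form_diag_minus_outer)

lemma quadratic_form_Mmat:
  assumes X: "X \<in> carrier_mat p L" and v: "v \<in> carrier_vec L"
  shows "v \<bullet> (Mmat X \<theta> *\<^sub>v v) = (\<Sum>j<p. softmax X \<theta> j * ((X *\<^sub>v v) $ j)\<^sup>2)"
  using X v quadratic_form_congruence[OF X diagm_carrier v]
  by (simp add: Mmat_def quadratic_form_diagm)

lemma quadratic_form_Hmat_le_Mmat:
  assumes X: "X \<in> carrier_mat p L" and v: "v \<in> carrier_vec L"
  shows "v \<bullet> (Hmat X \<theta> *\<^sub>v v) \<le> v \<bullet> (Mmat X \<theta> *\<^sub>v v)"
  using X v by (simp add: quadratic_form_Hmat quadratic_form_Mmat weighted_variance_def)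

lemma quadratic_form_Hmat_le_exp_mult:
  assumes X: "X \<in> carrier_mat p L" and p: "0 < p"
    and \<theta>: "\<theta> \<in> carrier_vec L" and \<theta>': "\<theta>' \<in> carrier_vec L" and v: "v \<in> carrier_vec L"
  shows "v \<bullet> (Hmat X \<theta> *\<^sub>v v) \<le>
    exp (2 * (Xnorm X * vnorm (\<theta> - \<theta>'))) * (v \<bullet> (Hmat X \<theta>' *\<^sub>v v))"
  using weighted_variance_le_mult[OF sum_softmax sum_softmax softmax_le_exp_mult[OF X p \<theta> \<theta>']] X p
  by (simp add: quadratic_form_Hmat[OF X v])

lemma Hmat_lam_bounds_perturbation:
  assumes X: "X \<in> carrier_mat p L" and p: "0 < p" and L: "0 < L"
    and \<theta>: "\<theta> \<in> carrier_vec L" and \<theta>': "\<theta>' \<in> carrier_vec L"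
    and lower: "a \<le> lam_min (Hmat X \<theta>')" and upper: "lam_max (Hmat X \<theta>') \<le> b"
  defines "E \<equiv> exp (2 * (Xnorm X * vnorm (\<theta> - \<theta>')))"
  shows "a / E \<le> lam_min (Hmat X \<theta>)" "lam_min (Hmat X \<theta>) \<le> lam_max (Hmat X \<theta>)"
    "lam_max (Hmat X \<theta>) \<le> E * b"
proof -
  note H = Hmat_carrier_symmetric[OF X]
  have E: "0 < E"
    by (simp add: E_def)
  have lower': "a / E * (v \<bullet> v) \<le> v \<bullet> (Hmat X \<theta> *\<^sub>v v)" if v: "v \<in> carrier_vec L" for v
  proof -
    have "a * (v \<bullet> v) \<le> v \<bullet> (Hmat X \<theta>' *\<^sub>v v)"
      using lower symmetric_real_mat_rayleigh(1)[OF H(1,2) v] scalar_prod_self_nonneg[of v]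
      by (meson mult_right_mono order_trans)
    also have "\<dots> \<le> E * (v \<bullet> (Hmat X \<theta> *\<^sub>v v))"
      using quadratic_form_Hmat_le_exp_mult[OF X p \<theta>' \<theta> v] vnorm_minus_commute[OF \<theta> \<theta>']
      by (simp add: E_def)
    finally show ?thesis
      using E by (simp add: field_simps)
  qed
  have upper': "v \<bullet> (Hmat X \<theta> *\<^sub>v v) \<le> E * b * (v \<bullet> v)" if v: "v \<in> carrier_vec L" for v
  proof -
    have "v \<bullet> (Hmat X \<theta> *\<^sub>v v) \<le> E * (v \<bullet> (Hmat X \<theta>' *\<^sub>v v))"
      using quadratic_form_Hmat_le_exp_mult[OF X p \<theta> \<theta>' v] by (simp add: E_def)
    also have "\<dots> \<le> E * (b * (v \<bullet> v))"
      using upper symmetric_real_mat_rayleigh(2)[OF H(1,2) v] scalar_prod_self_nonneg[of v] E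
      by (meson mult_left_mono mult_right_mono order_trans less_imp_le)
    finally show ?thesis
      by (simp add: mult.assoc)
  qed
  show "a / E \<le> lam_min (Hmat X \<theta>)" "lam_min (Hmat X \<theta>) \<le> lam_max (Hmat X \<theta>)"
    "lam_max (Hmat X \<theta>) \<le> E * b"
    using symmetric_real_mat_lam_bounds[OF H L lower' upper'] by auto
qed

lemma assumption_A_at_component:
  assumes A: "assumption_A X K \<alpha>s \<Theta>s sl2 su2 vs2"
    and opt: "in_Omega_star X K \<alpha>s \<Theta>s \<alpha>s \<Theta>s" and k: "k < K"
  shows "sl2 \<le> lam_min (Hmat X (\<Theta>s k))" "lam_max (Hmat X (\<Theta>s k)) \<le> su2"
    "lam_max (inv_sqrt (Hmat X (\<Theta>s k)) * Mmat X (\<Theta>s k) * inv_sqrt (Hmat X (\<Theta>s k))) \<le> vs2"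
proof -
  have "\<Theta>s k \<in> carrier_vec (dim_col X)"
    using opt k unfolding in_Omega_star_def in_param_def by auto
  then have "1 \<cdot>\<^sub>v \<Theta>s k + (1 - 1) \<cdot>\<^sub>v \<Theta>s k = \<Theta>s k"
    by (intro eq_vecI) auto
  then show "sl2 \<le> lam_min (Hmat X (\<Theta>s k))" "lam_max (Hmat X (\<Theta>s k)) \<le> su2"
    "lam_max (inv_sqrt (Hmat X (\<Theta>s k)) * Mmat X (\<Theta>s k) * inv_sqrt (Hmat X (\<Theta>s k))) \<le> vs2"
    using A[unfolded assumption_A_def, THEN conjunct2, THEN conjunct2, rule_format, OF opt k k, of 1]
    by (simp_all add: Let_def)
qed

lemma assumption_A_varsigma_ge_one:
  assumes X: "X \<in> carrier_mat p L" "0 < L" and A: "assumption_A X K \<alpha>s \<Theta>s sl2 su2 vs2"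
    and opt: "in_Omega_star X K \<alpha>s \<Theta>s \<alpha>s \<Theta>s" and k: "k < K"
  shows "1 \<le> vs2"
proof -
  note at_k = assumption_A_at_component[OF A opt k]
  have "0 < sl2"
    using A unfolding assumption_A_def by simp
  then have "pos_def_mat (Hmat X (\<Theta>s k)) L"
    using pos_def_mat_if_lam_min_pos[OF Hmat_carrier_symmetric[OF X(1)]] at_k(1) by simp
  then show ?thesis
    using lam_max_whitened_ge_one[OF _ X(2) Mmat_carrier_symmetric[OF X(1)]]
      quadratic_form_Hmat_le_Mmat[OF X(1)] at_k(3) order_trans by blast
qed

lemma Xnorm_mult_vnorm_le_radius:
  assumes p: "0 < dim_row X" and su: "0 < su" and c0: "0 \<le> c0" and vs: "1 \<le> vs\<^sup>2"
    and \<delta>0: "\<delta>0 \<le> c0 / vs\<^sup>2 * (su / Xnorm X)" and d: "vnorm d \<le> \<delta>0 / su"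
  shows "Xnorm X * vnorm d \<le> c0"
proof -
  have Xn: "0 \<le> Xnorm X"
    using Xnorm_nonneg[OF p] .
  have "Xnorm X * vnorm d \<le> Xnorm X * (c0 / vs\<^sup>2 * (su / Xnorm X) / su)"
    using d \<delta>0 Xn su by (meson divide_right_mono less_imp_le mult_left_mono order_trans)
  also have "\<dots> \<le> c0 / vs\<^sup>2"
    using Xn su c0 by (cases "Xnorm X = 0") (auto simp: field_simps)
  also have "\<dots> \<le> c0"
    using divide_left_mono[OF vs c0] vs by (cases "vs = 0") auto
  finally show ?thesis .
qed

theorem lemma8:
  shows "\<exists>C0::real. 0 < C0 \<and> C0 < 1/2 \<and>
    (\<forall>c0::real. 0 \<le> c0 \<and> c0 \<le> C0 \<longrightarrow>
      (\<exists>c::real. 0 < c \<and> c < 1 \<and>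
        (\<forall>(X::real mat) p L K (\<alpha>s::nat \<Rightarrow> real) (\<Theta>s::nat \<Rightarrow> real vec)
            (sl::real) (su::real) (vs::real) (\<delta>0::real).
           X \<in> carrier_mat p L \<longrightarrow> 0 < p \<longrightarrow> 0 < L \<longrightarrow>
           (\<forall>k<K. 0 < \<alpha>s k) \<longrightarrow>
           in_Omega_star X K \<alpha>s \<Theta>s \<alpha>s \<Theta>s \<longrightarrow>
           0 < sl \<longrightarrow> 0 < su \<longrightarrow>
           assumption_A X K \<alpha>s \<Theta>s (sl\<^sup>2) (su\<^sup>2) (vs\<^sup>2) \<longrightarrow>
           \<delta>0 \<le> c0 / vs\<^sup>2 * (su / Xnorm X) \<longrightarrow>
           (\<forall>k<K. \<forall>\<theta> \<in> carrier_vec L. vnorm (\<theta> - \<Theta>s k) \<le> \<delta>0 / su \<longrightarrow>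
              (1 - c) * sl\<^sup>2 \<le> lam_min (Hmat X \<theta>) \<and>
              lam_min (Hmat X \<theta>) \<le> lam_max (Hmat X \<theta>) \<and>
              lam_max (Hmat X \<theta>) \<le> (1 + c) * su\<^sup>2))))"
proof -
  have "(1 - 1/2) * sl\<^sup>2 \<le> lam_min (Hmat X \<theta>) \<and> lam_min (Hmat X \<theta>) \<le> lam_max (Hmat X \<theta>) \<and>
      lam_max (Hmat X \<theta>) \<le> (1 + 1/2) * su\<^sup>2"
    if c0: "0 \<le> c0" "c0 \<le> 1/8" and X: "X \<in> carrier_mat p L" "0 < p" "0 < L"
      and opt: "in_Omega_star X K \<alpha>s \<Theta>s \<alpha>s \<Theta>s" and su: "0 < su"
      and A: "assumption_A X K \<alpha>s \<Theta>s (sl\<^sup>2) (su\<^sup>2) (vs\<^sup>2)"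
      and \<delta>0: "\<delta>0 \<le> c0 / vs\<^sup>2 * (su / Xnorm X)" and k: "k < K"
      and \<theta>: "\<theta> \<in> carrier_vec L" and dist: "vnorm (\<theta> - \<Theta>s k) \<le> \<delta>0 / su"
    for c0 X p L K \<alpha>s \<Theta>s sl su vs \<delta>0 k \<theta>
  proof -
    note at_k = assumption_A_at_component[OF A opt k]
    have \<theta>k: "\<Theta>s k \<in> carrier_vec L"
      using opt k X(1) unfolding in_Omega_star_def in_param_def by auto
    define r where "r = Xnorm X * vnorm (\<theta> - \<Theta>s k)"
    have "r \<le> c0"
      using Xnorm_mult_vnorm_le_radius[OF _ su c0(1) _ \<delta>0 dist]
        assumption_A_varsigma_ge_one[OF X(1,3) A opt k] X by (simp add: r_def)
    then have E: "exp (2 * r) \<le> 3/2"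
      using exp_bound_lemma[of "2 * r"] c0 Xnorm_nonneg[of X] vnorm_nonneg[of "\<theta> - \<Theta>s k"] X
      by (simp add: r_def)
    then have "(1 - 1/2) * sl\<^sup>2 \<le> sl\<^sup>2 / exp (2 * r)" "exp (2 * r) * su\<^sup>2 \<le> (1 + 1/2) * su\<^sup>2"
      using divide_left_mono[of "exp (2 * r)" 2 "sl\<^sup>2"] mult_right_mono[of "exp (2 * r)" "3/2" "su\<^sup>2"]
      by auto
    then show ?thesis
      using Hmat_lam_bounds_perturbation[OF X \<theta> \<theta>k at_k(1,2), folded r_def] by linarith
  qed
  then show ?thesis
    by (intro exI[of _ "1/8"] conjI allI impI exI[of _ "1/2"] ballI) auto
qed

end
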